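(* Let $R$ be a commutative Noetherian ring with unity such that $\Gamma_E(R)$ has at least three vertices. If a vertex $[y]$ of $\Gamma_E(R)$ is adjacent to a leaf, then $\operatorname{ann}(y)$ is a maximal element of $\mathfrak F=\{\operatorname{ann}(z)\mid 0\neq z\in R\}$ and is an associated prime of $R$.
   Context: For $x,y\in R$ write $x\sim y$ iff $\operatorname{ann}(x)=\operatorname{ann}(y)$; $[x]$ denotes the equivalence class of $x$. Let $Z^*(R)$ be the set of nonzero zero divisors of $R$. The graph $\Gamma_E(R)$ is the simple graph whose vertices are the classes $[x]$ with $x\in Z^*(R)$, two distinct vertices $[x],[y]$ being adjacent iff $xy=0$. A leaf is a vertex of degree $1$. An associated prime of $R$ is a prime ideal of the form $\operatorname{ann}(y)$, $y\in R$. *)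

theory Defs
  imports "HOL-Algebra.Ring_Divisibility" "HOL-Algebra.Ideal"
begin

definition ann :: "('a, 'b) ring_scheme \<Rightarrow> 'a \<Rightarrow> 'a set" where
  "ann R x = {r \<in> carrier R. r \<otimes>\<^bsub>R\<^esub> x = \<zero>\<^bsub>R\<^esub>}"

definition Zstar :: "('a, 'b) ring_scheme \<Rightarrow> 'a set" where
  "Zstar R = {x \<in> carrier R. x \<noteq> \<zero>\<^bsub>R\<^esub> \<and>
      (\<exists>y \<in> carrier R. y \<noteq> \<zero>\<^bsub>R\<^esub> \<and> x \<otimes>\<^bsub>R\<^esub> y = \<zero>\<^bsub>R\<^esub>)}"

definition eclass :: "('a, 'b) ring_scheme \<Rightarrow> 'a \<Rightarrow> 'a set" where
  "eclass R x = {z \<in> carrier R. ann R z = ann R x}"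

definition EVerts :: "('a, 'b) ring_scheme \<Rightarrow> 'a set set" where
  "EVerts R = eclass R ` Zstar R"

definition EAdj :: "('a, 'b) ring_scheme \<Rightarrow> 'a set \<Rightarrow> 'a set \<Rightarrow> bool" where
  "EAdj R X Y \<longleftrightarrow> X \<in> EVerts R \<and> Y \<in> EVerts R \<and> X \<noteq> Y \<and>
      (\<exists>x \<in> X. \<exists>y \<in> Y. x \<otimes>\<^bsub>R\<^esub> y = \<zero>\<^bsub>R\<^esub>)"

definition ELeaf :: "('a, 'b) ring_scheme \<Rightarrow> 'a set \<Rightarrow> bool" where
  "ELeaf R X \<longleftrightarrow> X \<in> EVerts R \<and> card {Y. EAdj R X Y} = 1"

definition annFamily :: "('a, 'b) ring_scheme \<Rightarrow> 'a set set" where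
  "annFamily R = {ann R z | z. z \<in> carrier R \<and> z \<noteq> \<zero>\<^bsub>R\<^esub>}"

definition associated_prime :: "('a, 'b) ring_scheme \<Rightarrow> 'a set \<Rightarrow> bool" where
  "associated_prime R P \<longleftrightarrow> primeideal P R \<and> (\<exists>y \<in> carrier R. P = ann R y)"

end

theory Submission
  imports Defs
begin

text \<open>Let the leaf be [x]. A leaf has exactly one neighbour, so every nonzero w with wx = 0
  lies in [x] or [y]. If ann y \<subseteq> ann z with z \<noteq> 0, then xz = 0 since x \<in> ann y, so [z] is [x] or [y].
  The case [z] = [x] forces xx = 0, and a third vertex [c] then gives a contradiction: c is
  annihilated by some nonzero w \<in> {d, dx} with wx = 0, whence cx = 0 and [c] would be a neighbour
  of the leaf. So ann y is maximal among annihilators of nonzero elements, and such a maximal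
  annihilator is prime because ann y \<subseteq> ann (a y).\<close>

lemma ann_ideal:
  fixes R (structure)
  assumes "cring R" and "y \<in> carrier R"
  shows "ideal (ann R y) R"
proof -
  interpret cring R by fact
  show ?thesis
  proof (rule idealI)
    show "ring R" by (rule ring_axioms)
    show "subgroup (ann R y) (add_monoid R)"
    proof
      show "ann R y \<subseteq> carrier (add_monoid R)" by (auto simp: ann_def)
      show "\<And>a b. a \<in> ann R y \<Longrightarrow> b \<in> ann R y \<Longrightarrow> a \<otimes>\<^bsub>add_monoid R\<^esub> b \<in> ann R y"
        using assms(2) by (auto simp: ann_def l_distr)
      show "\<one>\<^bsub>add_monoid R\<^esub> \<in> ann R y" using assms(2) by (auto simp: ann_def)
      show "\<And>a. a \<in> ann R y \<Longrightarrow> inv\<^bsub>add_monoid R\<^esub> a \<in> ann R y"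
        using assms(2) by (auto simp: ann_def a_inv_def[symmetric] l_minus)
    qed
    show "\<And>a x. a \<in> ann R y \<Longrightarrow> x \<in> carrier R \<Longrightarrow> x \<otimes> a \<in> ann R y"
      using assms(2) by (auto simp: ann_def m_assoc)
    then show "\<And>a x. a \<in> ann R y \<Longrightarrow> x \<in> carrier R \<Longrightarrow> a \<otimes> x \<in> ann R y"
      by (metis ann_def m_comm mem_Collect_eq)
  qed
qed

lemma ann_subset_ann_mult:
  fixes R (structure)
  assumes "cring R" and "a \<in> carrier R" and "y \<in> carrier R"
  shows "ann R y \<subseteq> ann R (a \<otimes> y)"
proof
  interpret cring R by fact
  fix r assume "r \<in> ann R y"
  then have "r \<in> carrier R" and "r \<otimes> y = \<zero>" by (auto simp: ann_def)
  moreover have "r \<otimes> (a \<otimes> y) = a \<otimes> (r \<otimes> y)"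
    using \<open>r \<in> carrier R\<close> assms(2,3) by (metis m_assoc m_comm)
  ultimately show "r \<in> ann R (a \<otimes> y)" using assms(2) by (simp add: ann_def)
qed

lemma primeideal_maximal_ann:
  fixes R (structure)
  assumes "cring R" and "y \<in> carrier R" and "y \<noteq> \<zero>"
    and maximal: "\<And>z. z \<in> carrier R \<Longrightarrow> z \<noteq> \<zero> \<Longrightarrow> ann R y \<subseteq> ann R z \<Longrightarrow> ann R z = ann R y"
  shows "primeideal (ann R y) R"
proof (rule primeidealI)
  interpret cring R by fact
  show "ideal (ann R y) R" by (rule ann_ideal[OF assms(1,2)])
  show "cring R" by fact
  have "\<one> \<notin> ann R y" using assms(2,3) by (simp add: ann_def)
  then show "carrier R \<noteq> ann R y" by auto
  fix a b assume a: "a \<in> carrier R" and b: "b \<in> carrier R" and ab: "a \<otimes> b \<in> ann R y"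
  show "a \<in> ann R y \<or> b \<in> ann R y"
  proof (cases "a \<otimes> y = \<zero>")
    case True
    then show ?thesis using a by (simp add: ann_def)
  next
    case False
    have ann_ay: "ann R (a \<otimes> y) = ann R y"
      using maximal[OF _ False] ann_subset_ann_mult[OF assms(1) a assms(2)] a assms(2) by simp
    have "b \<otimes> (a \<otimes> y) = (a \<otimes> b) \<otimes> y" using a b assms(2) by (metis m_assoc m_comm)
    also have "\<dots> = \<zero>" using ab by (simp add: ann_def)
    finally have "b \<in> ann R (a \<otimes> y)" using b by (simp add: ann_def)
    then show ?thesis using ann_ay by simp
  qed
qed

lemma eclass_eq_iff:
  assumes "a \<in> carrier R" and "b \<in> carrier R"
  shows "eclass R a = eclass R b \<longleftrightarrow> ann R a = ann R b"
  using assms unfolding eclass_def by blast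

lemma mult_zero_eclass:
  fixes R (structure)
  assumes "cring R" and "x \<in> carrier R" and "y \<in> carrier R"
    and "a \<in> eclass R x" and "b \<in> eclass R y" and "a \<otimes> b = \<zero>"
  shows "x \<otimes> y = \<zero>"
proof -
  interpret cring R by fact
  have a: "a \<in> carrier R" "ann R a = ann R x" and b: "b \<in> carrier R" "ann R b = ann R y"
    using assms(4,5) by (auto simp: eclass_def)
  have "b \<in> ann R a" using a(1) b(1) assms(6) by (simp add: ann_def m_comm)
  then have "b \<otimes> x = \<zero>" unfolding a(2) by (simp add: ann_def)
  then have "x \<otimes> b = \<zero>" using assms(2) b(1) by (simp add: m_comm)
  then have "x \<in> ann R b" using assms(2) by (simp add: ann_def)
  then show ?thesis unfolding b(2) by (simp add: ann_def)
qed

lemma EAdj_sym: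
  fixes R (structure)
  assumes "cring R" and "EAdj R X Y"
  shows "EAdj R Y X"
proof -
  interpret cring R by fact
  have "X \<subseteq> carrier R" "Y \<subseteq> carrier R"
    using assms(2) by (auto simp: EAdj_def EVerts_def eclass_def)
  then show ?thesis using assms(2) unfolding EAdj_def by (metis m_comm subsetD)
qed

lemma EAdj_eclassI:
  fixes R (structure)
  assumes "x \<in> Zstar R" and "w \<in> Zstar R" and "ann R x \<noteq> ann R w" and "x \<otimes> w = \<zero>"
  shows "EAdj R (eclass R x) (eclass R w)"
proof -
  have "x \<in> eclass R x" "w \<in> eclass R w" using assms(1,2) by (auto simp: Zstar_def eclass_def)
  moreover have "eclass R x \<noteq> eclass R w"
    using assms(1-3) eclass_eq_iff by (fastforce simp: Zstar_def)
  ultimately show ?thesis using assms by (auto simp: EAdj_def EVerts_def)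
qed

lemma ELeaf_neighbour_unique:
  assumes "ELeaf R L" and "EAdj R L Y" and "EAdj R L Y'"
  shows "Y = Y'"
proof -
  have "card {Y. EAdj R L Y} = 1" using assms(1) by (simp add: ELeaf_def)
  then obtain Z where "{Y. EAdj R L Y} = {Z}" by (rule card_1_singletonE)
  then show ?thesis using assms(2,3) by blast
qed

lemma ann_of_leaf_annihilator:
  fixes R (structure)
  assumes "cring R" and "x \<in> Zstar R" and "y \<in> carrier R"
    and leaf: "ELeaf R (eclass R x)" and adj: "EAdj R (eclass R x) (eclass R y)"
    and "w \<in> carrier R" and "w \<noteq> \<zero>" and "w \<otimes> x = \<zero>"
  shows "ann R w = ann R x \<or> ann R w = ann R y"
proof (cases "ann R w = ann R x")
  case False
  interpret cring R by fact
  have "w \<in> Zstar R" using assms(2,6-8) by (auto simp: Zstar_def)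
  moreover have "x \<otimes> w = \<zero>" using assms(2,6,8) by (simp add: Zstar_def m_comm)
  ultimately have "EAdj R (eclass R x) (eclass R w)"
    using EAdj_eclassI[OF assms(2)] False by metis
  from ELeaf_neighbour_unique[OF leaf this adj] have "eclass R w = eclass R y" .
  then show ?thesis using eclass_eq_iff[OF assms(6,3)] by simp
qed simp

lemma ann_maximal_at_leaf_neighbour:
  fixes R (structure)
  assumes "cring R" and x: "x \<in> Zstar R" and y: "y \<in> Zstar R"
    and leaf: "ELeaf R (eclass R x)" and adj: "EAdj R (eclass R x) (eclass R y)"
    and c: "c \<in> Zstar R" and "eclass R c \<noteq> eclass R x" and "eclass R c \<noteq> eclass R y"
    and z: "z \<in> carrier R" "z \<noteq> \<zero>" and sub: "ann R y \<subseteq> ann R z"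
  shows "ann R z = ann R y"
proof -
  interpret cring R by fact
  have xc: "x \<in> carrier R" and yc: "y \<in> carrier R" and cc: "c \<in> carrier R" and "c \<noteq> \<zero>"
    using x y c by (auto simp: Zstar_def)
  note leaf_ann = ann_of_leaf_annihilator[OF assms(1) x yc leaf adj]
  have "x \<otimes> y = \<zero>"
    using adj mult_zero_eclass[OF assms(1) xc yc] by (auto simp: EAdj_def)
  then have x_ann_y: "x \<in> ann R y" using xc yc by (simp add: ann_def m_comm)
  have "x \<otimes> z = \<zero>" using sub x_ann_y by (auto simp: ann_def)
  then have "z \<otimes> x = \<zero>" using xc z(1) by (simp add: m_comm)
  from leaf_ann[OF z this] show ?thesis
  proof
    assume "ann R z = ann R x"
    then have sub_x: "ann R y \<subseteq> ann R x" using sub by simp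
    then have xx: "x \<otimes> x = \<zero>" using x_ann_y by (auto simp: ann_def)
    have "ann R c \<noteq> ann R x" "ann R c \<noteq> ann R y"
      using assms(7,8) eclass_eq_iff cc xc yc by metis+
    then have cx: "c \<otimes> x \<noteq> \<zero>" using leaf_ann[OF cc \<open>c \<noteq> \<zero>\<close>] by blast
    obtain d where d: "d \<in> carrier R" "d \<noteq> \<zero>" and cd: "c \<otimes> d = \<zero>"
      using c by (auto simp: Zstar_def)
    \<comment> \<open>a nonzero annihilator of c that is also killed by x\<close>
    define w where "w = (if d \<otimes> x = \<zero> then d else d \<otimes> x)"
    have wc: "w \<in> carrier R" and "w \<noteq> \<zero>" using d xc by (auto simp: w_def)
    have "w \<otimes> x = \<zero>" using xx d xc by (auto simp: w_def m_assoc)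
    moreover have "c \<in> ann R w" using cd d xc cc by (auto simp: w_def ann_def m_assoc[symmetric])
    ultimately have "c \<in> ann R x" using leaf_ann[OF wc \<open>w \<noteq> \<zero>\<close>] sub_x by auto
    with cx show ?thesis by (simp add: ann_def)
  qed
qed

theorem corollary3p3:
  fixes R :: "('a, 'b) ring_scheme" (structure) and y :: 'a
  assumes "cring R" and "noetherian_ring R"
    and "\<exists>A B C. A \<in> EVerts R \<and> B \<in> EVerts R \<and> C \<in> EVerts R \<and>
                 A \<noteq> B \<and> A \<noteq> C \<and> B \<noteq> C"
    and "y \<in> Zstar R"
    and "\<exists>L. ELeaf R L \<and> EAdj R (eclass R y) L"
  shows "ann R y \<in> annFamily R
       \<and> (\<forall>J \<in> annFamily R. ann R y \<subseteq> J \<longrightarrow> J = ann R y)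
       \<and> associated_prime R (ann R y)"
proof -
  have yc: "y \<in> carrier R" and "y \<noteq> \<zero>" using assms(4) by (auto simp: Zstar_def)
  obtain x where x: "x \<in> Zstar R" and leaf: "ELeaf R (eclass R x)"
    and "EAdj R (eclass R y) (eclass R x)"
    using assms(5) by (auto simp: ELeaf_def EVerts_def)
  then have adj: "EAdj R (eclass R x) (eclass R y)" using EAdj_sym[OF assms(1)] by blast
  obtain c where "c \<in> Zstar R" "eclass R c \<noteq> eclass R x" "eclass R c \<noteq> eclass R y"
    using assms(3) unfolding EVerts_def by (metis imageE)
  note maximal = ann_maximal_at_leaf_neighbour[OF assms(1) x assms(4) leaf adj this]
  have "primeideal (ann R y) R"
    using primeideal_maximal_ann[OF assms(1) yc \<open>y \<noteq> \<zero>\<close>] maximal by blast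
  then show ?thesis
    using maximal yc \<open>y \<noteq> \<zero>\<close> by (auto simp: annFamily_def associated_prime_def)
qed

end
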